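(* Let $X=\Gamma_1\sqcup\Gamma_2$ be a Heisenberg partition of a topological space $X$. Then for every continuous injective map $\gamma\colon\mathbb T\to X$ we have $\gamma(\mathbb T)\subseteq\Gamma_2$.
   Context: $\mathbb T=\{z\in\mathbb C\mid |z|=1\}$. A Heisenberg partition of $X$ is a partition $X=\Gamma_1\sqcup\Gamma_2$ such that for some integer $n\ge1$: (i) $\Gamma_1$ is open in $X$ and there is a homeomorphism $\psi_1\colon\mathbb R^\times\to\Gamma_1$ ($\mathbb R^\times=\mathbb R\setminus\{0\}$); (ii) there is a homeomorphism $\psi_2\colon\mathbb R^{2n}\to\Gamma_2$; (iii) for every subset $A\subseteq\mathbb R^\times$ the following are equivalent: $0$ is an accumulation point of $A$; $\Gamma_2\cap\overline{\psi_1(A)}\ne\emptyset$; $\Gamma_2\subseteq\overline{\psi_1(A)}$. *)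

theory Defs
  imports "HOL-Analysis.Analysis"
begin

text \<open>Heisenberg partition of a topological space X (given as an abstract topology).
  R^x = R - {0} with the Euclidean subspace topology; R^(2n) is Euclidean_space (2*n).\<close>

definition heisenberg_partition :: "'a topology \<Rightarrow> 'a set \<Rightarrow> 'a set \<Rightarrow> bool" where
  "heisenberg_partition X \<Gamma>1 \<Gamma>2 \<longleftrightarrow>
     \<Gamma>1 \<union> \<Gamma>2 = topspace X \<and> \<Gamma>1 \<inter> \<Gamma>2 = {} \<and>
     (\<exists>n::nat. n \<ge> 1 \<and>
       openin X \<Gamma>1 \<and>
       (\<exists>\<psi>1 :: real \<Rightarrow> 'a. \<exists>\<psi>2 :: (nat \<Rightarrow> real) \<Rightarrow> 'a.
          homeomorphic_map (top_of_set (- {0})) (subtopology X \<Gamma>1) \<psi>1 \<and>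
          homeomorphic_map (Euclidean_space (2 * n)) (subtopology X \<Gamma>2) \<psi>2 \<and>
          (\<forall>A \<subseteq> - {0::real}.
             ((0::real) islimpt A \<longleftrightarrow> \<Gamma>2 \<inter> X closure_of (\<psi>1 ` A) \<noteq> {}) \<and>
             (\<Gamma>2 \<inter> X closure_of (\<psi>1 ` A) \<noteq> {} \<longleftrightarrow> \<Gamma>2 \<subseteq> X closure_of (\<psi>1 ` A)))))"

end

theory Submission
  imports Defs
begin

(* Let \<phi> : \<Gamma>1 \<rightarrow> \<real>\<^sup>\<times> be the inverse of \<psi>1. If \<gamma>(\<T>) \<subseteq> \<Gamma>1, then \<phi> \<circ> \<gamma> embeds the circle
   into \<real>, which is impossible. Otherwise pick w with \<gamma>(w) \<in> \<Gamma>2 and read \<gamma> as the arc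
   t \<mapsto> \<gamma>(w e^{it}) on [0, 2\<pi>], whose ends lie in \<Gamma>2. If this arc met \<Gamma>1, a maximal
   subinterval (a, b) would be mapped into \<Gamma>1 with \<gamma>(a), \<gamma>(b) \<in> \<Gamma>2. On it h = \<phi> \<circ> \<gamma> is
   continuous, injective and nonzero, and condition (iii) makes 0 a limit point of h on both
   sides of any t \<in> (a, b). Then h((a, t]) and h([t, b)) both contain the open segment
   between 0 and h(t), although they share only h(t). *)

lemma connected_islimpt_open_segment_subset:
  fixes P :: "real set"
  assumes "connected P" "c \<notin> P" "c islimpt P" "y \<in> P"
  shows "open_segment c y \<subseteq> P"
proof
  fix x assume "x \<in> open_segment c y"
  then have x: "c < x \<and> x < y \<or> y < x \<and> x < c"
    by (auto simp: open_segment_eq_real_ivl split: if_splits)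
  then have "dist x c > 0"
    by auto
  then obtain p where p: "p \<in> P" "dist p c < dist x c"
    by (meson assms(3) islimpt_approachable)
  have ivl: "w \<in> P" if "u \<in> P" "v \<in> P" "u \<le> w" "w \<le> v" for u v w
    using assms(1) that unfolding is_interval_connected_1[symmetric] is_interval_1 by blast
  have "\<not> (p \<le> c \<and> c \<le> y)" "\<not> (y \<le> c \<and> c \<le> p)"
    using ivl[OF p(1) assms(4)] ivl[OF assms(4) p(1)] assms(2) by blast+
  then have "p \<le> x \<and> x \<le> y \<or> y \<le> x \<and> x \<le> p"
    using x p(2) unfolding dist_real_def by arith
  then show "x \<in> P"
    using ivl p(1) assms(4) by blast
qed

lemma continuous_inj_not_islimpt_both_sides:
  fixes f :: "real \<Rightarrow> real"
  assumes "continuous_on {a<..<b} f" "inj_on f {a<..<b}" "c \<notin> f ` {a<..<b}" "t \<in> {a<..<b}"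
  shows "\<not> (c islimpt f ` {a<..<t} \<and> c islimpt f ` {t<..<b})"
proof
  assume lim: "c islimpt f ` {a<..<t} \<and> c islimpt f ` {t<..<b}"
  have left: "open_segment c (f t) \<subseteq> f ` {a<..t}"
  proof (rule connected_islimpt_open_segment_subset)
    show "connected (f ` {a<..t})"
      using assms(4) by (intro connected_continuous_image continuous_on_subset[OF assms(1)]) auto
    show "c islimpt f ` {a<..t}"
      using lim by (rule islimpt_subset[OF conjunct1]) auto
  qed (use assms(3,4) in auto)
  have right: "open_segment c (f t) \<subseteq> f ` {t..<b}"
  proof (rule connected_islimpt_open_segment_subset)
    show "connected (f ` {t..<b})"
      using assms(4) by (intro connected_continuous_image continuous_on_subset[OF assms(1)]) auto
    show "c islimpt f ` {t..<b}"
      using lim by (rule islimpt_subset[OF conjunct2]) auto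
  qed (use assms(3,4) in auto)
  have "f t \<noteq> c" using assms(3,4) by blast
  then have "midpoint c (f t) \<in> f ` {a<..t} \<inter> f ` {t..<b}"
    using left right midpoint_in_open_segment by blast
  then obtain u v where uv: "u \<in> {a<..t}" "v \<in> {t..<b}" "f u = f v" "midpoint c (f t) = f u"
    by auto
  have "u = v"
    using inj_onD[OF assms(2) uv(3)] uv(1,2) assms(4) by auto
  then show False
    using uv \<open>f t \<noteq> c\<close> by auto
qed

lemma closed_real_maximal_gap:
  fixes C :: "real set"
  assumes "closed C" "l \<in> C" "r \<in> C" "l \<le> t" "t \<le> r" "t \<notin> C"
  obtains a b where "a \<in> C" "b \<in> C" "l \<le> a" "a < t" "t < b" "b \<le> r" "{a<..<b} \<inter> C = {}"
proof
  let ?L = "C \<inter> {..t}" and ?R = "C \<inter> {t..}"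
  have L: "closed ?L" "bdd_above ?L" "l \<in> ?L" and R: "closed ?R" "bdd_below ?R" "r \<in> ?R"
    using assms by (auto intro: closed_Int)
  show "Sup ?L \<in> C" "l \<le> Sup ?L" "Sup ?L < t"
    using closed_contains_Sup[OF _ L(2,1)] cSup_upper[OF L(3,2)] L(3) assms(6)
    by (fastforce simp: order_le_less)+
  show "Inf ?R \<in> C" "Inf ?R \<le> r" "t < Inf ?R"
    using closed_contains_Inf[OF _ R(2,1)] cInf_lower[OF R(3,2)] R(3) assms(6)
    by (fastforce simp: order_le_less)+
  show "{Sup ?L<..<Inf ?R} \<inter> C = {}"
    using cSup_upper[OF _ L(2)] cInf_lower[OF _ R(2)] by (force simp: not_le)
qed

lemma continuous_map_interval_maximal_subinterval:
  fixes l r t :: real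
  assumes g: "continuous_map (top_of_set {l..r}) X g" and "openin X U"
    and "g l \<notin> U" "g r \<notin> U" "t \<in> {l..r}" "g t \<in> U"
  obtains a b where "l \<le> a" "a < t" "t < b" "b \<le> r" "g a \<notin> U" "g b \<notin> U" "g ` {a<..<b} \<subseteq> U"
proof -
  define C where "C = {s \<in> {l..r}. g s \<notin> U}"
  have "C = topspace (top_of_set {l..r}) - {s \<in> topspace (top_of_set {l..r}). g s \<in> U}"
    by (auto simp: C_def)
  then have "closedin (top_of_set {l..r}) C"
    using openin_continuous_map_preimage[OF g \<open>openin X U\<close>] by (simp add: closedin_diff)
  then have "closed C"
    using closedin_closed_trans[of "{l..r}" C] by simp
  moreover have "l \<in> C" "r \<in> C" "l \<le> t" "t \<le> r" "t \<notin> C"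
    using assms(3-6) by (auto simp: C_def)
  ultimately obtain a b where gap: "a \<in> C" "b \<in> C" "l \<le> a" "a < t" "t < b" "b \<le> r"
      "{a<..<b} \<inter> C = {}"
    by (rule closed_real_maximal_gap)
  show thesis
  proof
    show "g a \<notin> U" "g b \<notin> U"
      using gap(1,2) by (simp_all add: C_def)
    show "g ` {a<..<b} \<subseteq> U"
      using gap(3,6,7) by (force simp: C_def)
  qed (use gap in auto)
qed

lemma continuous_map_interval_endpoint_in_closure_of:
  fixes l r c d e :: real
  assumes g: "continuous_map (top_of_set {l..r}) X g"
    and "l \<le> c" "c < d" "d \<le> r" "e \<in> {c, d}"
  shows "g e \<in> X closure_of (g ` {c<..<d})"
proof -
  have "{c<..<d} \<subseteq> {l..r}" "e \<in> {l..r}"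
    using assms(2-5) by auto
  then have "e \<in> top_of_set {l..r} closure_of {c<..<d}"
    using assms(3,5) by (auto simp: closure_of_subtopology Int_absorb1)
  then show ?thesis
    using continuous_map_image_closure_subset[OF g] by blast
qed

lemma bij_betw_rotated_cis:
  assumes "norm w = 1"
  shows "bij_betw (\<lambda>t. w * cis t) {0..<2*pi} (sphere 0 1)"
proof (rule bij_betw_imageI)
  have "Arg2pi (cis t) = t" if "t \<in> {0..<2*pi}" for t
    using that Arg2pi_unique[of 1 t] by (simp add: cis_conv_exp)
  then show "inj_on (\<lambda>t. w * cis t) {0..<2*pi}"
    using assms by (intro inj_onI) (metis mult_left_cancel norm_zero zero_neq_one)
  have "z \<in> (\<lambda>t. w * cis t) ` {0..<2*pi}" if "norm z = 1" for z
  proof (rule image_eqI)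
    show "z = w * cis (Arg2pi (z / w))"
      using that assms complex_norm_eq_1_exp[of "z / w"] by (auto simp: norm_divide cis_conv_exp)
    show "Arg2pi (z / w) \<in> {0..<2*pi}"
      using Arg2pi by auto
  qed
  then show "(\<lambda>t. w * cis t) ` {0..<2*pi} = sphere 0 1"
    using assms by (auto simp: norm_mult)
qed

lemma sphere_as_rotated_arc:
  fixes \<gamma> :: "complex \<Rightarrow> 'a"
  assumes "norm w = 1"
    and \<gamma>: "continuous_map (top_of_set (sphere 0 1)) X \<gamma>" "inj_on \<gamma> (sphere 0 1)"
  defines "g \<equiv> \<gamma> \<circ> (\<lambda>t. w * cis t)"
  shows "continuous_map (top_of_set {0..2*pi}) X g" "inj_on g {0<..<2*pi}"
    and "g 0 = \<gamma> w" "g (2*pi) = \<gamma> w" "\<gamma> ` sphere 0 1 \<subseteq> g ` {0..2*pi}"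
proof -
  have rot: "bij_betw (\<lambda>t. w * cis t) {0..<2*pi} (sphere 0 1)"
    using assms(1) by (rule bij_betw_rotated_cis)
  have "continuous_map (top_of_set {0..2*pi}) (top_of_set (sphere 0 1)) (\<lambda>t. w * cis t)"
    using assms(1) by (auto simp: continuous_map_in_subtopology norm_mult intro!: continuous_intros)
  then show "continuous_map (top_of_set {0..2*pi}) X g"
    unfolding g_def using \<gamma>(1) by (rule continuous_map_compose)
  have "inj_on g {0..<2*pi}"
    unfolding g_def using bij_betw_imp_inj_on[OF rot] \<gamma>(2)[folded bij_betw_imp_surj_on[OF rot]]
    by (rule comp_inj_on)
  then show "inj_on g {0<..<2*pi}"
    by (rule inj_on_subset) auto
  show "g 0 = \<gamma> w" "g (2*pi) = \<gamma> w"
    by (simp_all add: g_def)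
  show "\<gamma> ` sphere 0 1 \<subseteq> g ` {0..2*pi}"
    unfolding g_def image_comp[symmetric] bij_betw_imp_surj_on[OF rot, symmetric]
    by (intro image_mono) auto
qed

lemma heisenberg_partitionD:
  assumes "heisenberg_partition X \<Gamma>1 \<Gamma>2"
  shows "\<Gamma>1 \<union> \<Gamma>2 = topspace X" "\<Gamma>1 \<inter> \<Gamma>2 = {}" "openin X \<Gamma>1"
  using assms unfolding heisenberg_partition_def by blast+

text \<open>Only the chart of \<Gamma>1 and one implication of condition (iii) are used.\<close>

lemma heisenberg_partition_chart:
  assumes "heisenberg_partition X \<Gamma>1 \<Gamma>2"
  obtains \<phi> :: "'a \<Rightarrow> real" where
    "continuous_map (subtopology X \<Gamma>1) euclideanreal \<phi>" "inj_on \<phi> \<Gamma>1" "0 \<notin> \<phi> ` \<Gamma>1"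
    "\<And>A. A \<subseteq> \<Gamma>1 \<Longrightarrow> \<Gamma>2 \<inter> X closure_of A \<noteq> {} \<Longrightarrow> 0 islimpt \<phi> ` A"
proof -
  obtain \<psi> :: "real \<Rightarrow> 'a" where
    \<psi>: "homeomorphic_map (top_of_set (- {0})) (subtopology X \<Gamma>1) \<psi>"
    and iii: "\<forall>A \<subseteq> - {0::real}.
             (0 islimpt A \<longleftrightarrow> \<Gamma>2 \<inter> X closure_of (\<psi> ` A) \<noteq> {}) \<and>
             (\<Gamma>2 \<inter> X closure_of (\<psi> ` A) \<noteq> {} \<longleftrightarrow> \<Gamma>2 \<subseteq> X closure_of (\<psi> ` A))"
    using assms unfolding heisenberg_partition_def by (elim conjE exE) (rule that; assumption)
  have limit: "0 islimpt A" if "A \<subseteq> - {0}" "\<Gamma>2 \<inter> X closure_of (\<psi> ` A) \<noteq> {}" for A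
    using iii that by blast
  obtain \<phi> where maps: "homeomorphic_maps (top_of_set (- {0})) (subtopology X \<Gamma>1) \<psi> \<phi>"
    using \<psi> homeomorphic_map_maps by blast
  have "\<Gamma>1 \<subseteq> topspace X"
    using heisenberg_partitionD[OF assms] by blast
  then have \<phi>: "continuous_map (subtopology X \<Gamma>1) (top_of_set (- {0})) \<phi>"
    and \<psi>\<phi>: "\<And>y. y \<in> \<Gamma>1 \<Longrightarrow> \<psi> (\<phi> y) = y"
    using maps by (auto simp: homeomorphic_maps_def)
  have \<phi>_nz: "\<phi> ` \<Gamma>1 \<subseteq> - {0}"
    using continuous_map_image_subset_topspace[OF \<phi>] \<open>\<Gamma>1 \<subseteq> topspace X\<close> by auto
  show thesis
  proof
    show "continuous_map (subtopology X \<Gamma>1) euclideanreal \<phi>"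
      using \<phi> by (simp add: continuous_map_in_subtopology)
    show "inj_on \<phi> \<Gamma>1"
      by (metis \<psi>\<phi> inj_onI)
    show "0 \<notin> \<phi> ` \<Gamma>1"
      using \<phi>_nz by blast
    show "0 islimpt \<phi> ` A" if "A \<subseteq> \<Gamma>1" "\<Gamma>2 \<inter> X closure_of A \<noteq> {}" for A
    proof (rule limit)
      show "\<phi> ` A \<subseteq> - {0}"
        using that(1) \<phi>_nz by blast
      have "\<psi> ` \<phi> ` A = A"
        using that(1) \<psi>\<phi> by (force simp: image_image)
      then show "\<Gamma>2 \<inter> X closure_of (\<psi> ` \<phi> ` A) \<noteq> {}"
        using that(2) by simp
    qed
  qed
qed

lemma heisenberg_partition_no_sphere_in_\<Gamma>1:
  fixes \<gamma> :: "'b::euclidean_space \<Rightarrow> 'a"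
  assumes "heisenberg_partition X \<Gamma>1 \<Gamma>2" "2 \<le> DIM('b)" "r > 0"
    and "continuous_map (top_of_set (sphere c r)) X \<gamma>" "inj_on \<gamma> (sphere c r)"
  shows "\<not> \<gamma> ` sphere c r \<subseteq> \<Gamma>1"
proof
  assume in_\<Gamma>1: "\<gamma> ` sphere c r \<subseteq> \<Gamma>1"
  obtain \<phi> :: "'a \<Rightarrow> real" where
    \<phi>: "continuous_map (subtopology X \<Gamma>1) euclideanreal \<phi>" "inj_on \<phi> \<Gamma>1"
    by (metis heisenberg_partition_chart[OF assms(1)])
  have "continuous_map (top_of_set (sphere c r)) (subtopology X \<Gamma>1) \<gamma>"
    using assms(4) in_\<Gamma>1 by (auto simp: continuous_map_in_subtopology)
  then have "continuous_map (top_of_set (sphere c r)) euclideanreal (\<phi> \<circ> \<gamma>)"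
    using \<phi>(1) by (rule continuous_map_compose)
  then have "continuous_on (sphere c r) (\<phi> \<circ> \<gamma>)"
    by simp
  moreover have "inj_on (\<phi> \<circ> \<gamma>) (sphere c r)"
    using assms(5) in_\<Gamma>1 inj_on_subset[OF \<phi>(2)] by (intro comp_inj_on) auto
  ultimately have "DIM('b) \<le> DIM(real)"
    using no_embedding_sphere_lowdim assms(3) by blast
  then show False
    using assms(2) by simp
qed

lemma heisenberg_partition_open_arc_not_in_\<Gamma>1:
  fixes a b :: real
  assumes H: "heisenberg_partition X \<Gamma>1 \<Gamma>2" and "a < b"
    and g: "continuous_map (top_of_set {a..b}) X g" and inj: "inj_on g {a<..<b}"
    and ends: "g a \<in> \<Gamma>2" "g b \<in> \<Gamma>2"
  shows "\<not> g ` {a<..<b} \<subseteq> \<Gamma>1"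
proof
  assume in_\<Gamma>1: "g ` {a<..<b} \<subseteq> \<Gamma>1"
  define t where "t = (a + b) / 2"
  then have t: "a < t" "t < b"
    using \<open>a < b\<close> by simp_all
  obtain \<phi> :: "'a \<Rightarrow> real" where \<phi>:
    "continuous_map (subtopology X \<Gamma>1) euclideanreal \<phi>" "inj_on \<phi> \<Gamma>1" "0 \<notin> \<phi> ` \<Gamma>1"
    "\<And>A. A \<subseteq> \<Gamma>1 \<Longrightarrow> \<Gamma>2 \<inter> X closure_of A \<noteq> {} \<Longrightarrow> 0 islimpt \<phi> ` A"
    by (metis heisenberg_partition_chart[OF H])
  have limit: "0 islimpt \<phi> ` g ` {c<..<d}"
    if "a \<le> c" "c < d" "d \<le> b" "e \<in> {c, d}" "g e \<in> \<Gamma>2" for c d e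
  proof (rule \<phi>(4))
    show "g ` {c<..<d} \<subseteq> \<Gamma>1"
      using in_\<Gamma>1 that(1,3) by fastforce
    show "\<Gamma>2 \<inter> X closure_of (g ` {c<..<d}) \<noteq> {}"
      using continuous_map_interval_endpoint_in_closure_of[OF g that(1-4)] that(5) by blast
  qed
  have "{a<..<b} \<subseteq> {a..b}"
    by auto
  then have "continuous_map (top_of_set {a<..<b}) (subtopology X \<Gamma>1) g"
    using continuous_map_from_subtopology_mono[OF g] in_\<Gamma>1
    by (simp add: continuous_map_in_subtopology image_subset_iff_funcset)
  then have "continuous_map (top_of_set {a<..<b}) euclideanreal (\<phi> \<circ> g)"
    using \<phi>(1) by (rule continuous_map_compose)
  then have "continuous_on {a<..<b} (\<phi> \<circ> g)"
    by simp
  moreover have "inj_on (\<phi> \<circ> g) {a<..<b}"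
    using inj inj_on_subset[OF \<phi>(2) in_\<Gamma>1] by (rule comp_inj_on)
  moreover have "0 \<notin> (\<phi> \<circ> g) ` {a<..<b}"
    using \<phi>(3) in_\<Gamma>1 by auto
  ultimately have "\<not> (0 islimpt (\<phi> \<circ> g) ` {a<..<t} \<and> 0 islimpt (\<phi> \<circ> g) ` {t<..<b})"
    using t by (intro continuous_inj_not_islimpt_both_sides) auto
  then show False
    using limit[of a t a] limit[of t b b] t ends by (simp add: image_comp)
qed

lemma heisenberg_partition_arc_subset_\<Gamma>2:
  fixes l r :: real
  assumes H: "heisenberg_partition X \<Gamma>1 \<Gamma>2"
    and g: "continuous_map (top_of_set {l..r}) X g" and inj: "inj_on g {l<..<r}"
    and ends: "g l \<in> \<Gamma>2" "g r \<in> \<Gamma>2"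
  shows "g ` {l..r} \<subseteq> \<Gamma>2"
proof (rule image_subsetI, rule ccontr)
  fix t assume t: "t \<in> {l..r}" "g t \<notin> \<Gamma>2"
  have g_in: "g s \<in> \<Gamma>1 \<union> \<Gamma>2" if "s \<in> {l..r}" for s
    using continuous_map_image_subset_topspace[OF g] that heisenberg_partitionD(1)[OF H] by auto
  have "g l \<notin> \<Gamma>1" "g r \<notin> \<Gamma>1" "g t \<in> \<Gamma>1"
    using ends t g_in heisenberg_partitionD(2)[OF H] by auto
  then obtain a b where ab: "l \<le> a" "a < t" "t < b" "b \<le> r"
    and "g a \<notin> \<Gamma>1" "g b \<notin> \<Gamma>1" and in_\<Gamma>1: "g ` {a<..<b} \<subseteq> \<Gamma>1"
    using continuous_map_interval_maximal_subinterval[OF g heisenberg_partitionD(3)[OF H] _ _ t(1)]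
    by metis
  then have "g a \<in> \<Gamma>2" "g b \<in> \<Gamma>2"
    using g_in[of a] g_in[of b] by auto
  moreover have "{a..b} \<subseteq> {l..r}" "{a<..<b} \<subseteq> {l<..<r}"
    using ab by auto
  then have "continuous_map (top_of_set {a..b}) X g" "inj_on g {a<..<b}"
    using continuous_map_from_subtopology_mono[OF g] inj_on_subset[OF inj] by auto
  ultimately show False
    using heisenberg_partition_open_arc_not_in_\<Gamma>1[OF H] ab(2,3) in_\<Gamma>1 by force
qed

theorem lemma2p6:
  fixes X :: "'a topology" and \<Gamma>1 \<Gamma>2 :: "'a set" and \<gamma> :: "complex \<Rightarrow> 'a"
  assumes "heisenberg_partition X \<Gamma>1 \<Gamma>2"
    and "continuous_map (top_of_set (sphere (0::complex) 1)) X \<gamma>"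
    and "inj_on \<gamma> (sphere (0::complex) 1)"
  shows "\<gamma> ` sphere 0 1 \<subseteq> \<Gamma>2"
proof -
  have "\<not> \<gamma> ` sphere 0 1 \<subseteq> \<Gamma>1"
    using heisenberg_partition_no_sphere_in_\<Gamma>1[OF assms(1) _ _ assms(2,3)] by simp
  then obtain w where w: "w \<in> sphere 0 1" "\<gamma> w \<notin> \<Gamma>1"
    by blast
  moreover have "\<gamma> ` sphere 0 1 \<subseteq> topspace X"
    using continuous_map_image_subset_topspace[OF assms(2)] by simp
  ultimately have "\<gamma> w \<in> \<Gamma>2"
    using heisenberg_partitionD(1)[OF assms(1)] by blast
  have "norm w = 1"
    using w(1) by simp
  let ?g = "\<gamma> \<circ> (\<lambda>t. w * cis t)"
  note arc = sphere_as_rotated_arc[OF \<open>norm w = 1\<close> assms(2,3)]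
  have "?g ` {0..2*pi} \<subseteq> \<Gamma>2"
    by (rule heisenberg_partition_arc_subset_\<Gamma>2[OF assms(1) arc(1,2)])
      (simp_all add: arc(3,4) \<open>\<gamma> w \<in> \<Gamma>2\<close>)
  then show ?thesis
    using arc(5) by blast
qed

end
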